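(* For $\mathbf v\in\mathbb{R}^\infty$, let $h_{\mathbf v}(x)$ be the generating function of $\mathbb{F}^{\rm S}\mathbf v$ and $h_{-\mathbf v}(x)$ the generating function of $\mathbb{L}^{\rm S}\mathbf v$, where $\mathbb{F}^{\rm S}=(1,x(1+x))$ and $\mathbb{L}^{\rm S}=(1+2x,x(1+x))$. Let $C(x)=\frac{1-\sqrt{1-4x}}{2x}$ and $M(x)=\frac{1-x-\sqrt{(1-x)^2-4x^2}}{2x^2}$. Then: (a) $h_{\mathbf v}(xC(x))=\frac{1}{1+2xC(x)}\,h_{-\mathbf v}(xC(x))$; (b) $h_{-\mathbf v}\!\left(x+\frac{x^2}{1-x}M\!\left(\frac{x}{1-x}\right)\right)=\left(1+2x+\frac{2x^2}{1-x}M\!\left(\frac{x}{1-x}\right)\right)h_{\mathbf v}\!\left(x+\frac{x^2}{1-x}M\!\left(\frac{x}{1-x}\right)\right)$.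
   Context: $\mathbb{R}^\infty$ is the space of real column vectors, identified with their generating functions. For formal power series $g(x)$ and $f(x)$ with $f(0)=0$, $(g(x),f(x))$ denotes the infinite lower triangular matrix whose $j$-th column has generating function $g(x)f(x)^j$; it maps a vector with generating function $U(x)$ to one with generating function $g(x)U(f(x))$. *)

theory Defs
  imports "HOL-Computational_Algebra.Formal_Power_Series"
begin

text \<open>Vectors of R-infinity are identified with their (formal) generating functions,
  i.e. elements of type real fps.\<close>

text \<open>Formal square root with constant term root 2 of the constant term
  (the principal branch, so sqrt(1 - ...) has constant term 1).\<close>
definition fps_sqrt :: "real fps \<Rightarrow> real fps" where
  "fps_sqrt a = fps_radical (\<lambda>k x. root k x) 2 a"

definition riordan_apply :: "real fps \<Rightarrow> real fps \<Rightarrow> real fps \<Rightarrow> real fps" where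
  "riordan_apply g f U = g * (U oo f)"

definition FS :: "real fps \<Rightarrow> real fps" where
  "FS U = riordan_apply 1 (fps_X * (1 + fps_X)) U"

definition LS :: "real fps \<Rightarrow> real fps" where
  "LS U = riordan_apply (1 + 2 * fps_X) (fps_X * (1 + fps_X)) U"

text \<open>C(x) = (1 - sqrt(1-4x)) / (2x); division by x realised by fps_shift.\<close>
definition catalanC :: "real fps" where
  "catalanC = fps_const (1/2) * fps_shift 1 (1 - fps_sqrt (1 - 4 * fps_X))"

definition motzkinM :: "real fps" where
  "motzkinM = fps_const (1/2) *
     fps_shift 2 (1 - fps_X - fps_sqrt ((1 - fps_X)^2 - 4 * fps_X^2))"

end

theory Submission
  imports Defs
begin

text \<open>Both arrays share the multiplier x(1+x), so their outputs differ only by the factor 1+2x: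
  h_{-v}(x) = (1+2x) h_v(x). Substituting any series with vanishing constant term, in particular
  xC(x) and x + x^2/(1-x) M(x/(1-x)), gives both identities.\<close>

lemma LS_eq_mult_FS: "LS U = (1 + 2 * fps_X) * FS U"
  by (simp add: LS_def FS_def riordan_apply_def)

lemma LS_compose:
  fixes U G :: "real fps"
  assumes "fps_nth G 0 = 0"
  shows "LS U oo G = (1 + 2 * G) * (FS U oo G)"
proof -
  have "LS U oo G = ((1 + 2 * fps_X) oo G) * (FS U oo G)"
    unfolding LS_eq_mult_FS by (rule fps_compose_mult_distrib[OF assms])
  also have "(1 + 2 * fps_X) oo G = 1 + 2 * G"
    using assms by (simp add: fps_compose_add_distrib fps_compose_mult_distrib)
  finally show ?thesis .
qed

lemma FS_compose:
  fixes U G :: "real fps"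
  assumes "fps_nth G 0 = 0"
  shows "FS U oo G = inverse (1 + 2 * G) * (LS U oo G)"
proof -
  have "fps_nth (1 + 2 * G) 0 \<noteq> 0"
    using assms by simp
  then have "inverse (1 + 2 * G) * (1 + 2 * G) = 1"
    by (rule inverse_mult_eq_1)
  then show ?thesis
    unfolding LS_compose[OF assms] by (simp flip: mult.assoc)
qed

theorem corollary4p6:
  fixes U :: "real fps"
  defines "hv \<equiv> FS U" and "hmv \<equiv> LS U"
  shows "hv oo (fps_X * catalanC)
           = inverse (1 + 2 * fps_X * catalanC) * (hmv oo (fps_X * catalanC))
         \<and> hmv oo (fps_X + fps_X^2 / (1 - fps_X) * (motzkinM oo (fps_X / (1 - fps_X))))
           = (1 + 2 * fps_X + 2 * fps_X^2 / (1 - fps_X) * (motzkinM oo (fps_X / (1 - fps_X))))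
             * (hv oo (fps_X + fps_X^2 / (1 - fps_X) * (motzkinM oo (fps_X / (1 - fps_X)))))"
proof
  show "hv oo (fps_X * catalanC)
          = inverse (1 + 2 * fps_X * catalanC) * (hmv oo (fps_X * catalanC))"
    using FS_compose[of "fps_X * catalanC" U] unfolding hv_def hmv_def by (simp add: mult.assoc)
next
  define M' where "M' = motzkinM oo (fps_X / (1 - fps_X))"
  have div_unit: "c * fps_X^2 / (1 - fps_X) = c * fps_X^2 * inverse (1 - fps_X)" for c :: "real fps"
    by (rule fps_divide_unit) simp
  have "fps_nth (fps_X + fps_X^2 / (1 - fps_X) * M') 0 = 0"
    using div_unit[of 1] by (simp add: power2_eq_square mult.assoc)
  from LS_compose[OF this, of U]
  show "hmv oo (fps_X + fps_X^2 / (1 - fps_X) * (motzkinM oo (fps_X / (1 - fps_X))))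
          = (1 + 2 * fps_X + 2 * fps_X^2 / (1 - fps_X) * (motzkinM oo (fps_X / (1 - fps_X))))
            * (hv oo (fps_X + fps_X^2 / (1 - fps_X) * (motzkinM oo (fps_X / (1 - fps_X)))))"
    using div_unit[of 1] div_unit[of 2] unfolding hv_def hmv_def M'_def[symmetric]
    by (simp add: algebra_simps)
qed

end
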